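(* Let $a,b,c\in\mathbb{R}\setminus\{0\}$ with $b^2-4ac>0$, and let $\{P_m(z)\}_{m\geq 0}$ be the sequence of functions of $z$ generated by \[ \sum_{m=0}^\infty P_m(z)\, t^m=\frac{1}{(at^2+bt+c)(1-tz)}. \] Let $\alpha,\beta$ be the zeros of $at^2+bt+c$ with $|\alpha|\leq|\beta|$. Then there exists $N\in\mathbb{N}$ such that for all $m>N$, \[ \mathcal{Z}(P_m)\cap B\!\left(\tfrac12\left(\tfrac{1}{|\alpha|}+\tfrac{1}{|\beta|}\right),0\right)=\emptyset . \]
   Context: A sequence $\{P_m(z)\}$ is generated by $f(t,z)$ if, for each $z\in\mathbb{C}$, $f(t,z)$ is analytic in $t$ in a neighborhood of $t=0$ and $P_m(z)$ is the coefficient of $t^m$ in the power series expansion of $f(t,z)$ in $t$ about $0$. $\mathcal{Z}(P_m)$ is the set of zeros of $P_m$ in $\mathbb{C}$, and $B(R,0)$ is the open disk of radius $R$ centered at $0$. *)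

theory Defs
  imports "HOL-Complex_Analysis.Complex_Analysis"
begin

definition genP :: "real \<Rightarrow> real \<Rightarrow> real \<Rightarrow> nat \<Rightarrow> complex \<Rightarrow> complex" where
  "genP a b c m z =
     fps_nth (fps_expansion (\<lambda>t. 1 / ((complex_of_real a * t\<^sup>2 + complex_of_real b * t
                                        + complex_of_real c) * (1 - t * z))) 0) m"

end

theory Submission
  imports Defs
begin

text \<open>Since a t^2 + b t + c = c (1 - u t) (1 - v t) with u = 1/\<alpha> and v = 1/\<beta>, the
  generating function is 1/c times a product of three geometric series, and partial fractions
  give c (u - v) P_m(z) = u h_m(u, z) - v h_m(v, z), where h_m(x, z) is the sum of x^i z^(m-i)
  over i \<le> m. For |z| < r = (|u| + |v|)/2 < |u|, the identity (u - z) h_m(u, z) = u^(m+1) - z^(m+1)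
  bounds the first term below by a constant times |u|^m, while the second is at most
  (m + 1) |v| r^m, which is eventually smaller.\<close>

definition geometric_fps :: "'a::comm_ring_1 \<Rightarrow> 'a fps" where
  "geometric_fps w = Abs_fps (\<lambda>n. w ^ n)"

lemma geometric_fps_nth [simp]: "geometric_fps w $ n = w ^ n"
  by (simp add: geometric_fps_def)

lemma geometric_fps_eq_inverse:
  fixes w :: "'a::field"
  shows "geometric_fps w = inverse (1 - fps_const w * fps_X)"
proof (rule sym, rule fps_inverse_unique, rule fps_ext)
  fix n
  show "((1 - fps_const w * fps_X) * geometric_fps w) $ n = 1 $ n"
    by (cases n) (simp_all add: algebra_simps)
qed

lemma has_fps_expansion_geometric:
  fixes w :: "'a::{banach, real_normed_field}"
  shows "(\<lambda>t. inverse (1 - w * t)) has_fps_expansion geometric_fps w"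
  unfolding geometric_fps_eq_inverse by (intro fps_expansion_intros) simp

lemma geometric_fps_mult_nth:
  "(geometric_fps x * geometric_fps y) $ n = (\<Sum>i\<le>n. x ^ i * y ^ (n - i))"
  by (simp add: fps_mult_nth atLeast0AtMost)

lemma geometric_fps_mult_partial_fractions:
  "fps_const (x - y) * (geometric_fps x * geometric_fps y) =
     fps_const x * geometric_fps x - fps_const y * geometric_fps y"
proof (rule fps_ext)
  fix n
  have "x ^ Suc n - y ^ Suc n = (x - y) * (\<Sum>i\<le>n. x ^ i * y ^ (n - i))"
    using diff_power_eq_sum[of x n y] by (simp add: lessThan_Suc_atMost)
  then show "(fps_const (x - y) * (geometric_fps x * geometric_fps y)) $ n =
      (fps_const x * geometric_fps x - fps_const y * geometric_fps y) $ n"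
    by (simp add: geometric_fps_mult_nth)
qed

lemma quadratic_roots_vieta:
  fixes a b c \<alpha> \<beta> :: "'a::field"
  assumes "\<alpha> \<noteq> \<beta>" "a * \<alpha>\<^sup>2 + b * \<alpha> + c = 0" "a * \<beta>\<^sup>2 + b * \<beta> + c = 0"
  shows "b = - a * (\<alpha> + \<beta>)" and "c = a * \<alpha> * \<beta>"
proof -
  have "(\<alpha> - \<beta>) * (a * (\<alpha> + \<beta>) + b) = (a * \<alpha>\<^sup>2 + b * \<alpha> + c) - (a * \<beta>\<^sup>2 + b * \<beta> + c)"
    by (simp add: algebra_simps power2_eq_square)
  also have "\<dots> = 0"
    using assms(2,3) by simp
  finally have "(\<alpha> - \<beta>) * (a * (\<alpha> + \<beta>) + b) = 0" .
  with assms(1) have "b + a * (\<alpha> + \<beta>) = 0"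
    by (simp add: add.commute)
  then show b: "b = - a * (\<alpha> + \<beta>)"
    by (simp add: eq_neg_iff_add_eq_0)
  from assms(2) show "c = a * \<alpha> * \<beta>"
    unfolding b by (simp add: algebra_simps power2_eq_square)
qed

lemma quadratic_eq_reversed_factors:
  fixes a b c \<alpha> \<beta> t :: "'a::field"
  assumes "\<alpha> \<noteq> \<beta>" "\<alpha> \<noteq> 0" "\<beta> \<noteq> 0"
    and "a * \<alpha>\<^sup>2 + b * \<alpha> + c = 0" "a * \<beta>\<^sup>2 + b * \<beta> + c = 0"
  shows "a * t\<^sup>2 + b * t + c = c * (1 - t / \<alpha>) * (1 - t / \<beta>)"
  using assms(2,3) unfolding quadratic_roots_vieta[OF assms(1,4,5)]
  by (simp add: field_simps power2_eq_square)

lemma genP_eq_geometric_fps_nth: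
  fixes a b c \<alpha> \<beta> :: real
  assumes "\<alpha> \<noteq> \<beta>" "\<alpha> \<noteq> 0" "\<beta> \<noteq> 0"
    and "a * \<alpha>\<^sup>2 + b * \<alpha> + c = 0" "a * \<beta>\<^sup>2 + b * \<beta> + c = 0"
  shows "genP a b c m z = fps_nth
    (geometric_fps (of_real (1 / \<alpha>)) * geometric_fps (of_real (1 / \<beta>)) * geometric_fps z) m
      / of_real c"
proof -
  define u v :: complex where "u = of_real (1 / \<alpha>)" and "v = of_real (1 / \<beta>)"
  have factors: "of_real a * t\<^sup>2 + of_real b * t + of_real c = of_real c * (1 - u * t) * (1 - v * t)"
    for t :: complex
    using quadratic_eq_reversed_factors[of "of_real \<alpha>" "of_real \<beta>" "of_real a" "of_real b" "of_real c" t]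
      assms unfolding u_def v_def by (simp flip: of_real_mult of_real_power of_real_add)
  let ?G = "geometric_fps u * geometric_fps v * geometric_fps z"
  have "(\<lambda>t. 1 / ((of_real a * t\<^sup>2 + of_real b * t + of_real c) * (1 - t * z))) =
      (\<lambda>t. inverse (of_real c) * (inverse (1 - u * t) * inverse (1 - v * t) * inverse (1 - z * t)))"
    unfolding factors by (simp add: divide_inverse inverse_mult_distrib mult_ac)
  moreover have "(\<lambda>t. inverse (of_real c) * (inverse (1 - u * t) * inverse (1 - v * t) * inverse (1 - z * t)))
      has_fps_expansion fps_const (inverse (of_real c)) * ?G"
    by (intro fps_expansion_intros has_fps_expansion_geometric)
  ultimately have "genP a b c m z = fps_nth (fps_const (inverse (of_real c)) * ?G) m"
    unfolding genP_def by (simp add: fps_expansion_eqI)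
  then show ?thesis
    unfolding u_def v_def by (simp add: divide_inverse mult.commute)
qed

lemma quadratic_roots_abs_neq:
  fixes a b c \<alpha> \<beta> :: real
  assumes "b \<noteq> 0" "\<alpha> \<noteq> \<beta>"
    and "a * \<alpha>\<^sup>2 + b * \<alpha> + c = 0" "a * \<beta>\<^sup>2 + b * \<beta> + c = 0"
  shows "\<bar>\<alpha>\<bar> \<noteq> \<bar>\<beta>\<bar>"
proof
  assume "\<bar>\<alpha>\<bar> = \<bar>\<beta>\<bar>"
  with assms(2) have "\<alpha> + \<beta> = 0"
    by (auto simp: abs_eq_iff)
  with quadratic_roots_vieta(1)[OF assms(2-4)] assms(1) show False
    by simp
qed

lemma norm_sum_pow_mult_pow_le:
  fixes x y :: "'a::real_normed_div_algebra" and r :: real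
  assumes "norm x \<le> r" "norm y \<le> r"
  shows "norm (\<Sum>i\<le>m. x ^ i * y ^ (m - i)) \<le> Suc m * r ^ m"
proof -
  have "0 \<le> r"
    using assms(1) norm_ge_zero order_trans by blast
  have "norm (x ^ i * y ^ (m - i)) \<le> r ^ m" if "i \<le> m" for i
  proof -
    have "norm (x ^ i * y ^ (m - i)) = norm x ^ i * norm y ^ (m - i)"
      by (simp add: norm_mult norm_power)
    also have "\<dots> \<le> r ^ i * r ^ (m - i)"
      using assms \<open>0 \<le> r\<close> by (intro mult_mono power_mono) auto
    also have "\<dots> = r ^ m"
      using that by (simp flip: power_add)
    finally show ?thesis .
  qed
  then have "norm (\<Sum>i\<le>m. x ^ i * y ^ (m - i)) \<le> (\<Sum>i\<le>m. r ^ m)"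
    by (intro order_trans[OF norm_sum] sum_mono) auto
  then show ?thesis
    by simp
qed

lemma norm_sum_pow_mult_pow_ge:
  fixes x y :: "'a::real_normed_field"
  assumes "norm y \<le> r" "r < norm x"
  shows "(norm x ^ Suc m - r ^ Suc m) / (norm x + r) \<le> norm (\<Sum>i\<le>m. x ^ i * y ^ (m - i))"
proof -
  let ?S = "\<Sum>i\<le>m. x ^ i * y ^ (m - i)"
  have "norm x ^ Suc m - r ^ Suc m \<le> norm (x ^ Suc m) - norm (y ^ Suc m)"
    unfolding norm_power using power_mono[OF assms(1) norm_ge_zero, of "Suc m"] by linarith
  also have "\<dots> \<le> norm (x ^ Suc m - y ^ Suc m)"
    by (rule norm_triangle_ineq2)
  also have "x ^ Suc m - y ^ Suc m = (x - y) * ?S"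
    using diff_power_eq_sum[of x m y] by (simp add: lessThan_Suc_atMost)
  also have "norm ((x - y) * ?S) \<le> (norm x + r) * norm ?S"
    unfolding norm_mult using norm_triangle_ineq4[of x y] assms(1)
    by (intro mult_right_mono) auto
  finally have "norm x ^ Suc m - r ^ Suc m \<le> (norm x + r) * norm ?S" .
  moreover have "0 < norm x + r"
    using assms norm_ge_zero[of y] by linarith
  ultimately show ?thesis
    by (simp add: pos_divide_le_eq mult.commute)
qed

lemma eventually_linear_times_geometric_less:
  fixes r U V :: real
  assumes "0 \<le> r" "r < U"
  shows "eventually (\<lambda>m. V * (Suc m * r ^ m) < U * ((U ^ Suc m - r ^ Suc m) / (U + r))) sequentially"
proof -
  define q where "q = r / U"
  have "0 \<le> q" "q < 1"
    using assms unfolding q_def by auto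
  have geometric: "(\<lambda>m. q ^ m) \<longlonglongrightarrow> 0"
    using \<open>0 \<le> q\<close> \<open>q < 1\<close> by (intro LIMSEQ_power_zero) simp
  have "(\<lambda>m. of_nat m * q ^ m + q ^ m) \<longlonglongrightarrow> 0 + 0"
    using \<open>0 \<le> q\<close> \<open>q < 1\<close> by (intro tendsto_add powser_times_n_limit_0 geometric) simp
  then have linear: "(\<lambda>m. Suc m * q ^ m) \<longlonglongrightarrow> 0"
    by (simp add: algebra_simps)
  have "(\<lambda>m. U * ((U - r * q ^ m) / (U + r)) - V * (Suc m * q ^ m))
      \<longlonglongrightarrow> U * ((U - r * 0) / (U + r)) - V * 0"
    using assms
    by (intro tendsto_diff tendsto_mult_left tendsto_divide tendsto_const geometric linear) auto
  moreover have "U * ((U - r * 0) / (U + r)) - V * 0 > 0"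
    using assms by simp
  ultimately have "eventually (\<lambda>m. V * (Suc m * q ^ m) < U * ((U - r * q ^ m) / (U + r))) sequentially"
    by (auto dest: order_tendstoD(1))
  then show ?thesis
  proof (rule eventually_mono)
    fix m
    assume less: "V * (Suc m * q ^ m) < U * ((U - r * q ^ m) / (U + r))"
    have "r ^ m = U ^ m * q ^ m" "U ^ Suc m - r ^ Suc m = U ^ m * (U - r * q ^ m)"
      using assms unfolding q_def by (simp_all add: power_divide algebra_simps)
    then have "V * (Suc m * r ^ m) = U ^ m * (V * (Suc m * q ^ m))"
      and "U * ((U ^ Suc m - r ^ Suc m) / (U + r)) = U ^ m * (U * ((U - r * q ^ m) / (U + r)))"
      by simp_all
    moreover have "U ^ m * (V * (Suc m * q ^ m)) < U ^ m * (U * ((U - r * q ^ m) / (U + r)))"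
      using less assms by (intro mult_strict_left_mono) auto
    ultimately show "V * (Suc m * r ^ m) < U * ((U ^ Suc m - r ^ Suc m) / (U + r))"
      by (simp only:)
  qed
qed

lemma eventually_geometric_fps_triple_nth_nonzero:
  fixes u v :: "'a::real_normed_field"
  assumes "norm v < norm u"
  shows "eventually (\<lambda>m. \<forall>z. norm z < (norm u + norm v) / 2 \<longrightarrow>
    fps_nth (geometric_fps u * geometric_fps v * geometric_fps z) m \<noteq> 0) sequentially"
proof -
  define r where "r = (norm u + norm v) / 2"
  have "0 \<le> r" "r < norm u" "norm v \<le> r"
    using assms norm_ge_zero[of v] unfolding r_def by auto
  from eventually_linear_times_geometric_less[OF \<open>0 \<le> r\<close> \<open>r < norm u\<close>, of "norm v"]
  show ?thesis
    unfolding r_def[symmetric]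
  proof (rule eventually_mono, intro allI impI)
    fix m and z :: 'a
    assume less: "norm v * (Suc m * r ^ m) < norm u * ((norm u ^ Suc m - r ^ Suc m) / (norm u + r))"
      and "norm z < r"
    let ?h = "\<lambda>x. fps_nth (geometric_fps x * geometric_fps z) m"
    have "(u - v) * fps_nth (geometric_fps u * geometric_fps v * geometric_fps z) m =
        fps_nth (fps_const (u - v) * (geometric_fps u * geometric_fps v) * geometric_fps z) m"
      by (simp add: mult.assoc)
    also have "\<dots> = u * ?h u - v * ?h v"
      unfolding geometric_fps_mult_partial_fractions by (simp add: algebra_simps)
    finally have diff: "(u - v) * fps_nth (geometric_fps u * geometric_fps v * geometric_fps z) m =
        u * ?h u - v * ?h v" .
    have "norm (v * ?h v) \<le> norm v * (Suc m * r ^ m)"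
      unfolding norm_mult geometric_fps_mult_nth using \<open>norm v \<le> r\<close> \<open>norm z < r\<close>
      by (intro mult_left_mono norm_sum_pow_mult_pow_le) auto
    also note less
    also have "norm u * ((norm u ^ Suc m - r ^ Suc m) / (norm u + r)) \<le> norm (u * ?h u)"
      unfolding norm_mult geometric_fps_mult_nth using \<open>r < norm u\<close> \<open>norm z < r\<close>
      by (intro mult_left_mono norm_sum_pow_mult_pow_ge) auto
    finally have "u * ?h u - v * ?h v \<noteq> 0"
      by auto
    with diff show "fps_nth (geometric_fps u * geometric_fps v * geometric_fps z) m \<noteq> 0"
      by auto
  qed
qed

theorem mainTheorem11:
  fixes a b c \<alpha> \<beta> :: real
  assumes "a \<noteq> 0" and "b \<noteq> 0" and "c \<noteq> 0"
    and "b\<^sup>2 - 4 * a * c > 0"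
    and "a * \<alpha>\<^sup>2 + b * \<alpha> + c = 0" and "a * \<beta>\<^sup>2 + b * \<beta> + c = 0"
    and "\<alpha> \<noteq> \<beta>" and "\<bar>\<alpha>\<bar> \<le> \<bar>\<beta>\<bar>"
  shows "\<exists>N::nat. \<forall>m>N.
           {z. genP a b c m z = 0} \<inter> ball 0 ((1 / \<bar>\<alpha>\<bar> + 1 / \<bar>\<beta>\<bar>) / 2) = {}"
proof -
  have "\<alpha> \<noteq> 0" "\<beta> \<noteq> 0"
    using assms(3,5,6) by auto
  have "\<bar>\<alpha>\<bar> < \<bar>\<beta>\<bar>"
    using quadratic_roots_abs_neq[OF assms(2,7,5,6)] assms(8) by simp
  define u v :: complex where "u = of_real (1 / \<alpha>)" and "v = of_real (1 / \<beta>)"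
  have norms: "norm u = 1 / \<bar>\<alpha>\<bar>" "norm v = 1 / \<bar>\<beta>\<bar>"
    unfolding u_def v_def by (simp_all add: norm_divide)
  with \<open>\<bar>\<alpha>\<bar> < \<bar>\<beta>\<bar>\<close> \<open>\<alpha> \<noteq> 0\<close> have "norm v < norm u"
    by (simp add: frac_less2)
  from eventually_geometric_fps_triple_nth_nonzero[OF this]
  obtain N where N: "\<And>m z. m \<ge> N \<Longrightarrow> norm z < (norm u + norm v) / 2 \<Longrightarrow>
      fps_nth (geometric_fps u * geometric_fps v * geometric_fps z) m \<noteq> 0"
    unfolding eventually_sequentially by blast
  have "genP a b c m z \<noteq> 0" if "m \<ge> N" "norm z < (norm u + norm v) / 2" for m z
    using N[OF that] assms(3)
    unfolding genP_eq_geometric_fps_nth[OF assms(7) \<open>\<alpha> \<noteq> 0\<close> \<open>\<beta> \<noteq> 0\<close> assms(5,6)] u_def v_def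
    by simp
  then show ?thesis
    unfolding norms by (intro exI[of _ N]) (auto simp: dist_norm)
qed

end
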